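(* For every $u\in L_{\mathrm{up}}$, the set $F_u$ is $2$-thin, i.e. every vertex $v\in V$ lies in $V_\ell$ for at most two links $\ell\in F_u$.
   Context: Let $(G=(V,E),L,w)$ be a WTAP instance (spanning tree $G$, links $L\subseteq\binom V2$, weights $w>0$) with a fixed root $r\in V$, and let $F\subseteq L$ be a WTAP solution, i.e. $\bigcup_{\ell\in F}P_\ell=E$, where $P_\ell$ is the edge set of the tree path between the endpoints of $\ell$ and $V_\ell$ its vertex set. Ancestors of $v$ are the vertices on the $r$-$v$ path in $G$ (including $r$ and $v$); descendants are defined reciprocally. $\mathrm{apex}(\ell)$ is the vertex of $V_\ell$ closest to $r$. An up-link is a link $\{t,b\}$ with $t$ an ancestor of $b$; $L_{\mathrm{up}}$ is the set of up-links. For $v\in V$ let $B_v=\{\ell\in F\colon\mathrm{apex}(\ell)\text{ is a descendant of }v\}$. For an up-link $u=\{t,b\}$ with $t$ an ancestor of $b$, let $v_u$ be the ancestor of $t$ farthest from $r$ such that $P_u\subseteq\bigcup_{\ell\in B_{v_u}}P_\ell$, and fix $F_u\subseteq B_{v_u}$ inclusion-wise minimal with $P_u\subseteq\bigcup_{\ell\in F_u}P_\ell$. *)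

theory Defs
  imports Complex_Main
begin

text \<open>Graphs: vertices of type 'a, edges are 2-element sets of vertices.
A simple path is a nonempty distinct vertex list whose consecutive vertices are adjacent.\<close>

definition is_path :: "'a set set \<Rightarrow> 'a list \<Rightarrow> bool" where
  "is_path E p \<longleftrightarrow> p \<noteq> [] \<and> distinct p \<and> (\<forall>i. Suc i < length p \<longrightarrow> {p ! i, p ! Suc i} \<in> E)"

definition is_tree :: "'a set \<Rightarrow> 'a set set \<Rightarrow> bool" where
  "is_tree V E \<longleftrightarrow> finite V \<and> V \<noteq> {} \<and>
     (\<forall>e\<in>E. \<exists>x y. e = {x, y} \<and> x \<noteq> y \<and> x \<in> V \<and> y \<in> V) \<and>
     (\<forall>u\<in>V. \<forall>v\<in>V. \<exists>!p. is_path E p \<and> hd p = u \<and> last p = v)"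

definition binom2 :: "'a set \<Rightarrow> 'a set set" where
  "binom2 V = {e. e \<subseteq> V \<and> card e = 2}"

definition tpath :: "'a set set \<Rightarrow> 'a \<Rightarrow> 'a \<Rightarrow> 'a list" where
  "tpath E u v = (THE p. is_path E p \<and> hd p = u \<and> last p = v)"

definition path_verts :: "'a set set \<Rightarrow> 'a \<Rightarrow> 'a \<Rightarrow> 'a set" where
  "path_verts E u v = set (tpath E u v)"

definition path_edges :: "'a set set \<Rightarrow> 'a \<Rightarrow> 'a \<Rightarrow> 'a set set" where
  "path_edges E u v = {{tpath E u v ! i, tpath E u v ! Suc i} | i. Suc i < length (tpath E u v)}"

definition link_edges :: "'a set set \<Rightarrow> 'a set \<Rightarrow> 'a set set" where
  "link_edges E l = \<Union>{path_edges E x y | x y. l = {x, y}}"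

definition link_verts :: "'a set set \<Rightarrow> 'a set \<Rightarrow> 'a set" where
  "link_verts E l = \<Union>{path_verts E x y | x y. l = {x, y}}"

text \<open>Distance from the root (number of vertices on the root path).\<close>
definition depth :: "'a set set \<Rightarrow> 'a \<Rightarrow> 'a \<Rightarrow> nat" where
  "depth E r x = length (tpath E r x)"

definition ancestor :: "'a set set \<Rightarrow> 'a \<Rightarrow> 'a \<Rightarrow> 'a \<Rightarrow> bool" where
  "ancestor E r a x \<longleftrightarrow> a \<in> path_verts E r x"

definition apex :: "'a set set \<Rightarrow> 'a \<Rightarrow> 'a set \<Rightarrow> 'a" where
  "apex E r l = (THE a. a \<in> link_verts E l \<and> (\<forall>x\<in>link_verts E l. depth E r a \<le> depth E r x))"

definition Bset :: "'a set set \<Rightarrow> 'a \<Rightarrow> 'a set set \<Rightarrow> 'a \<Rightarrow> 'a set set" where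
  "Bset E r F v = {l \<in> F. ancestor E r v (apex E r l)}"

definition up_links :: "'a set set \<Rightarrow> 'a \<Rightarrow> 'a set set \<Rightarrow> 'a set set" where
  "up_links E r L = {l \<in> L. \<exists>t b. l = {t, b} \<and> ancestor E r t b}"

definition thin2 :: "'a set set \<Rightarrow> 'a set \<Rightarrow> 'a set set \<Rightarrow> bool" where
  "thin2 E V S \<longleftrightarrow> (\<forall>v\<in>V. card {l \<in> S. v \<in> link_verts E l} \<le> 2)"

end

theory Submission
  imports Defs
begin

text \<open>Minimality of \<open>F\<^sub>u\<close> gives every link of \<open>F\<^sub>u\<close> a private edge on the tree path
\<open>P\<^sub>u\<close>, covered by no other link of \<open>F\<^sub>u\<close>. If three links of \<open>F\<^sub>u\<close> passed through a
common vertex \<open>v\<close>, order their private edges along \<open>P\<^sub>u\<close>. The paths of the two outer links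
together form a subgraph that is connected through \<open>v\<close> and contains both outer private edges;
by uniqueness of tree paths it contains the whole stretch of \<open>P\<^sub>u\<close> between them, in
particular the middle private edge, which is absurd.\<close>

definition edges_of :: "'a list \<Rightarrow> 'a set set" where
  "edges_of p = {{p ! i, p ! Suc i} | i. Suc i < length p}"

definition adjacency :: "'a set set \<Rightarrow> ('a \<times> 'a) set" where
  "adjacency S = {(x, y). {x, y} \<in> S}"

lemma is_path_iff_edges_of: "is_path E p \<longleftrightarrow> p \<noteq> [] \<and> distinct p \<and> edges_of p \<subseteq> E"
  unfolding is_path_def edges_of_def by blast

lemma edges_of_rev: "edges_of (rev p) = edges_of p"
proof -
  have rev_le: "edges_of (rev q) \<subseteq> edges_of q" for q :: "'a list"
  proof
    fix e assume "e \<in> edges_of (rev q)"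
    then obtain i where i: "Suc i < length q" "e = {rev q ! i, rev q ! Suc i}"
      unfolding edges_of_def by auto
    define j where "j = length q - Suc (Suc i)"
    have "Suc j < length q" "rev q ! i = q ! Suc j" "rev q ! Suc i = q ! j"
      using i unfolding j_def by (auto simp: rev_nth Suc_diff_Suc)
    then show "e \<in> edges_of q" using i unfolding edges_of_def by (auto simp: insert_commute)
  qed
  show ?thesis using rev_le[of p] rev_le[of "rev p"] by auto
qed

lemma is_path_rev: "is_path E p \<Longrightarrow> is_path E (rev p)"
  by (simp add: is_path_iff_edges_of edges_of_rev)

lemma is_path_mono: "is_path S p \<Longrightarrow> S \<subseteq> E \<Longrightarrow> is_path E p"
  unfolding is_path_def by blast

lemma is_path_infix:
  assumes "is_path E p" "i \<le> j" "j < length p"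
  shows "is_path E (drop i (take (Suc j) p))"
proof -
  let ?s = "drop i (take (Suc j) p)"
  have "edges_of ?s \<subseteq> edges_of p"
  proof
    fix e assume "e \<in> edges_of ?s"
    then obtain m where "Suc m < length ?s" "e = {?s ! m, ?s ! Suc m}"
      unfolding edges_of_def by blast
    then have "Suc (i + m) < length p" "e = {p ! (i + m), p ! Suc (i + m)}"
      using assms(2,3) by auto
    then show "e \<in> edges_of p" unfolding edges_of_def by blast
  qed
  moreover have "?s \<noteq> []" using assms(2,3) by simp
  ultimately show ?thesis
    using assms(1) unfolding is_path_iff_edges_of by (blast intro: distinct_drop distinct_take)
qed

lemma rtrancl_adjacency_path:
  assumes "(x, y) \<in> (adjacency S)\<^sup>*"
  shows "\<exists>q. is_path S q \<and> hd q = x \<and> last q = y"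
  using assms
proof (induction rule: rtrancl_induct)
  case base
  show ?case by (rule exI[of _ "[x]"]) (simp add: is_path_def)
next
  case (step y z)
  then obtain q where q: "is_path S q" "hd q = x" "last q = y" by blast
  have yz: "{y, z} \<in> S" using step(2) unfolding adjacency_def by simp
  have q_ne: "q \<noteq> []" using q(1) unfolding is_path_def by auto
  show ?case
  proof (cases "z \<in> set q")
    case True
    then obtain i where i: "i < length q" "q ! i = z" by (metis in_set_conv_nth)
    have "is_path S (take (Suc i) q)" using q(1) i unfolding is_path_def by auto
    moreover have "hd (take (Suc i) q) = x" using q(2) q_ne by (simp add: hd_take)
    moreover have "last (take (Suc i) q) = z" using i by (simp add: take_Suc_conv_app_nth)
    ultimately show ?thesis by blast
  next
    case False
    have "edges_of (q @ [z]) \<subseteq> insert {last q, z} (edges_of q)"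
    proof
      fix e assume "e \<in> edges_of (q @ [z])"
      then obtain i where i: "Suc i < Suc (length q)" "e = {(q @ [z]) ! i, (q @ [z]) ! Suc i}"
        unfolding edges_of_def by auto
      show "e \<in> insert {last q, z} (edges_of q)"
      proof (cases "Suc i < length q")
        case True
        then show ?thesis using i by (auto simp: nth_append edges_of_def)
      next
        case False
        then have "i = length q - 1" "Suc i = length q" using i by simp_all
        then show ?thesis using i q_ne by (simp add: nth_append last_conv_nth)
      qed
    qed
    then have "is_path S (q @ [z])" using q(1) q(3) yz False unfolding is_path_iff_edges_of by auto
    then show ?thesis using q q_ne by auto
  qed
qed

lemma path_vertices_connected:
  assumes "edges_of p \<subseteq> S" "a \<in> set p" "c \<in> set p"
  shows "(a, c) \<in> (adjacency S)\<^sup>*"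
proof -
  have from_hd: "(hd p, p ! i) \<in> (adjacency S)\<^sup>*" if "i < length p" for i
    using that
  proof (induction i)
    case 0
    then show ?case by (simp add: hd_conv_nth)
  next
    case (Suc i)
    then have "(p ! i, p ! Suc i) \<in> adjacency S"
      using assms(1) unfolding edges_of_def adjacency_def by blast
    with Suc show ?case by (meson Suc_lessD rtrancl.rtrancl_into_rtrancl)
  qed
  have "sym ((adjacency S)\<^sup>*)"
    by (rule sym_rtrancl) (auto simp: sym_def adjacency_def insert_commute)
  then show ?thesis using assms(2,3) from_hd
    by (metis in_set_conv_nth rtrancl_trans symD)
qed

lemma tree_edge_subset: "is_tree V E \<Longrightarrow> e \<in> E \<Longrightarrow> e \<subseteq> V"
  unfolding is_tree_def by fastforce

lemma tree_path_nth_in_V: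
  assumes "is_tree V E" "is_path E p" "Suc 0 < length p" "i < length p"
  shows "p ! i \<in> V"
proof -
  obtain j where "Suc j < length p" "i = j \<or> i = Suc j"
  proof (cases "Suc i < length p")
    case True
    then show ?thesis using that by blast
  next
    case False
    then show ?thesis using that[of "i - 1"] assms(3,4) by simp
  qed
  moreover have "{p ! j, p ! Suc j} \<subseteq> V" if "Suc j < length p" for j
    using that assms(1,2) tree_edge_subset unfolding is_path_def by blast
  ultimately show ?thesis by blast
qed

lemma tpath_correct:
  assumes "is_tree V E" "x \<in> V" "y \<in> V"
  shows "is_path E (tpath E x y) \<and> hd (tpath E x y) = x \<and> last (tpath E x y) = y"
proof -
  have "\<exists>!p. is_path E p \<and> hd p = x \<and> last p = y" using assms unfolding is_tree_def by blast
  then show ?thesis unfolding tpath_def by (rule theI')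
qed

lemma tpath_unique:
  assumes "is_tree V E" "x \<in> V" "y \<in> V" "is_path E q" "hd q = x" "last q = y"
  shows "tpath E x y = q"
proof -
  have "\<exists>!p. is_path E p \<and> hd p = x \<and> last p = y" using assms unfolding is_tree_def by blast
  then show ?thesis unfolding tpath_def using assms by (simp add: the1_equality)
qed

lemma tpath_swap:
  assumes "is_tree V E" "x \<in> V" "y \<in> V"
  shows "tpath E y x = rev (tpath E x y)"
  using tpath_correct[OF assms] is_path_rev
  by (intro tpath_unique[OF assms(1,3,2)]) (auto simp: is_path_def hd_rev last_rev)

lemma
  assumes "is_tree V E" "x \<in> V" "y \<in> V"
  shows link_edges_pair: "link_edges E {x, y} = edges_of (tpath E x y)"
    and link_verts_pair: "link_verts E {x, y} = set (tpath E x y)"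
proof -
  have swap: "tpath E y x = rev (tpath E x y)" using tpath_swap[OF assms] .
  have "{path_edges E a c | a c. {x, y} = {a, c}} = {edges_of (tpath E x y)}"
    using swap unfolding path_edges_def edges_of_def[symmetric]
    by (auto simp: doubleton_eq_iff edges_of_rev)
  then show "link_edges E {x, y} = edges_of (tpath E x y)" unfolding link_edges_def by simp
  have "{path_verts E a c | a c. {x, y} = {a, c}} = {set (tpath E x y)}"
    using swap unfolding path_verts_def by (auto simp: doubleton_eq_iff)
  then show "link_verts E {x, y} = set (tpath E x y)" unfolding link_verts_def by simp
qed

lemma mem_edges_of_subset_set: "e \<in> edges_of p \<Longrightarrow> e \<subseteq> set p"
  unfolding edges_of_def by auto

lemma rtrancl_adjacency_mono: "S \<subseteq> T \<Longrightarrow> (adjacency S)\<^sup>* \<subseteq> (adjacency T)\<^sup>*"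
  unfolding adjacency_def by (intro rtrancl_mono) auto

lemma tree_path_edge_in_connecting_subgraph:
  assumes tree: "is_tree V E" and p: "is_path E p" and S: "S \<subseteq> E"
    and ik: "i \<le> k" and kj: "k < j" and j: "j < length p"
    and conn: "(p ! i, p ! j) \<in> (adjacency S)\<^sup>*"
  shows "{p ! k, p ! Suc k} \<in> S"
proof -
  obtain q where q: "is_path S q" "hd q = p ! i" "last q = p ! j"
    using rtrancl_adjacency_path[OF conn] by blast
  define s where "s = drop i (take (Suc j) p)"
  have s_len: "length s = Suc j - i" and s_nth: "\<And>m. m < length s \<Longrightarrow> s ! m = p ! (i + m)"
    using ik kj j unfolding s_def by auto
  have s_path: "is_path E s" using is_path_infix[OF p] ik kj j unfolding s_def by simp
  have s_ne: "s \<noteq> []" using s_len ik kj by auto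
  have s_ends: "hd s = p ! i" "last s = p ! j"
    using s_ne s_len s_nth[of 0] s_nth[of "length s - 1"] ik kj
    by (simp_all add: hd_conv_nth last_conv_nth)
  have ends_V: "p ! i \<in> V" "p ! j \<in> V" using tree_path_nth_in_V[OF tree p] ik kj j by auto
  have "s = q"
    using tpath_unique[OF tree ends_V s_path s_ends]
      tpath_unique[OF tree ends_V is_path_mono[OF q(1) S] q(2,3)]
    by simp
  then have "edges_of s \<subseteq> S" using q(1) by (simp add: is_path_iff_edges_of)
  moreover have "{s ! (k - i), s ! Suc (k - i)} \<in> edges_of s"
    unfolding edges_of_def using s_len ik kj by auto
  moreover have "s ! (k - i) = p ! k" "s ! Suc (k - i) = p ! Suc k"
    using s_len s_nth[of "k - i"] s_nth[of "Suc (k - i)"] ik kj by auto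
  ultimately show ?thesis by auto
qed

lemma binom2_elim:
  assumes "l \<in> binom2 V" obtains x y where "l = {x, y}" "x \<in> V" "y \<in> V"
  using assms unfolding binom2_def by (auto simp: card_2_iff)

lemma
  assumes tree: "is_tree V E" and l: "l \<in> binom2 V"
  shows link_edges_subset: "link_edges E l \<subseteq> E"
    and link_edge_subset_verts: "e \<in> link_edges E l \<Longrightarrow> e \<subseteq> link_verts E l"
    and link_verts_connected:
      "a \<in> link_verts E l \<Longrightarrow> c \<in> link_verts E l \<Longrightarrow> (a, c) \<in> (adjacency (link_edges E l))\<^sup>*"
proof -
  obtain x y where xy: "l = {x, y}" "x \<in> V" "y \<in> V" using binom2_elim[OF l] .
  note pair = link_edges_pair[OF tree xy(2,3)] link_verts_pair[OF tree xy(2,3)]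
  show "link_edges E l \<subseteq> E"
    using tpath_correct[OF tree xy(2,3)] unfolding xy pair is_path_iff_edges_of by blast
  show "e \<in> link_edges E l \<Longrightarrow> e \<subseteq> link_verts E l"
    unfolding xy pair by (rule mem_edges_of_subset_set)
  show "a \<in> link_verts E l \<Longrightarrow> c \<in> link_verts E l \<Longrightarrow> (a, c) \<in> (adjacency (link_edges E l))\<^sup>*"
    unfolding xy pair by (rule path_vertices_connected[OF order_refl])
qed

lemma links_through_vertex_cover_path_between:
  assumes tree: "is_tree V E" and p: "is_path E p"
    and la: "la \<in> binom2 V" and lc: "lc \<in> binom2 V"
    and v: "v \<in> link_verts E la" "v \<in> link_verts E lc"
    and i: "{p ! i, p ! Suc i} \<in> link_edges E la"
    and j: "{p ! j, p ! Suc j} \<in> link_edges E lc" "Suc j < length p"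
    and ik: "i \<le> k" and kj: "k \<le> j"
  shows "{p ! k, p ! Suc k} \<in> link_edges E la \<union> link_edges E lc"
proof (rule tree_path_edge_in_connecting_subgraph[OF tree p _ ik _ j(2)])
  let ?S = "link_edges E la \<union> link_edges E lc"
  show "?S \<subseteq> E" using link_edges_subset[OF tree la] link_edges_subset[OF tree lc] by blast
  show "k < Suc j" using kj by simp
  have "(p ! i, v) \<in> (adjacency ?S)\<^sup>*"
    using link_verts_connected[OF tree la _ v(1)] link_edge_subset_verts[OF tree la i]
      rtrancl_adjacency_mono[of "link_edges E la" ?S] by blast
  moreover have "(v, p ! Suc j) \<in> (adjacency ?S)\<^sup>*"
    using link_verts_connected[OF tree lc v(2)] link_edge_subset_verts[OF tree lc j(1)]
      rtrancl_adjacency_mono[of "link_edges E lc" ?S] by blast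
  ultimately show "(p ! i, p ! Suc j) \<in> (adjacency ?S)\<^sup>*" by (rule rtrancl_trans)
qed

lemma minimal_cover_private_element:
  assumes "A \<subseteq> \<Union>(f ` C)" "\<forall>C'. C' \<subset> C \<longrightarrow> \<not> A \<subseteq> \<Union>(f ` C')" "c \<in> C"
  obtains a where "a \<in> A" "a \<in> f c" "\<forall>c'\<in>C - {c}. a \<notin> f c'"
proof -
  have "C - {c} \<subset> C" using assms(3) by blast
  then obtain a where "a \<in> A" "a \<notin> \<Union>(f ` (C - {c}))" using assms(2) by blast
  then show ?thesis using assms(1) that by blast
qed

lemma card_gt_2_obtain_less:
  fixes N :: "'a::linorder set"
  assumes "2 < card N"
  obtains i j m where "i \<in> N" "j \<in> N" "m \<in> N" "i < j" "j < m"
proof -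
  define xs where "xs = sorted_list_of_set N"
  have "finite N" using assms by (simp add: card_ge_0_finite)
  then have "set xs = N" "length xs = card N" "sorted_wrt (<) xs"
    unfolding xs_def by simp_all
  then show ?thesis
    using that[of "xs ! 0" "xs ! 1" "xs ! 2"] assms by (auto simp: sorted_wrt_nth_less)
qed

lemma minimal_link_cover_of_path_thin2:
  assumes tree: "is_tree V E" and p: "is_path E p" and C: "C \<subseteq> binom2 V"
    and cover: "edges_of p \<subseteq> \<Union>(link_edges E ` C)"
    and minimal: "\<forall>C'. C' \<subset> C \<longrightarrow> \<not> edges_of p \<subseteq> \<Union>(link_edges E ` C')"
  shows "thin2 E V C"
  unfolding thin2_def
proof
  fix v
  define private_edge where "private_edge l k \<longleftrightarrow> Suc k < length p \<and>
      {p ! k, p ! Suc k} \<in> link_edges E l \<and> (\<forall>l'\<in>C - {l}. {p ! k, p ! Suc k} \<notin> link_edges E l')"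
    for l k
  have "\<exists>k. private_edge l k" if "l \<in> C" for l
    using minimal_cover_private_element[OF cover minimal that]
    unfolding private_edge_def edges_of_def by blast
  then obtain k where k: "\<And>l. l \<in> C \<Longrightarrow> private_edge l (k l)" by metis
  have k_inj: "inj_on k C"
  proof (rule inj_onI, rule ccontr)
    fix l l' assume "l \<in> C" "l' \<in> C" "k l = k l'" "l \<noteq> l'"
    then show False using k[of l] k[of l'] unfolding private_edge_def by auto
  qed
  define A where "A = {l \<in> C. v \<in> link_verts E l}"
  show "card A \<le> 2"
  proof (rule ccontr)
    assume "\<not> card A \<le> 2"
    moreover have "card (k ` A) = card A"
      using k_inj by (intro card_image) (auto simp: A_def intro: inj_on_subset)
    ultimately have "2 < card (k ` A)" by simp
    then obtain la lb lc where
      abc: "la \<in> A" "lb \<in> A" "lc \<in> A" and order: "k la < k lb" "k lb < k lc"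
      by (elim card_gt_2_obtain_less) blast
    then have "la \<in> binom2 V" "lc \<in> binom2 V" using C unfolding A_def by auto
    from links_through_vertex_cover_path_between[OF tree p this, of v "k la" "k lc" "k lb"]
    have "{p ! k lb, p ! Suc (k lb)} \<in> link_edges E la \<union> link_edges E lc"
      using abc order k[of la] k[of lc] unfolding A_def private_edge_def by auto
    moreover have "la \<noteq> lb" "lc \<noteq> lb" using order by auto
    ultimately show False using abc k[of lb] unfolding A_def private_edge_def by blast
  qed
qed

theorem lemma11:
  fixes V :: "'a set" and E L F :: "'a set set" and w :: "'a set \<Rightarrow> real" and r :: 'a
    and u :: "'a set" and t b vu :: 'a and Fu :: "'a set set"
  assumes tree: "is_tree V E"
    and links: "L \<subseteq> binom2 V"
    and wpos: "\<forall>l\<in>L. w l > 0"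
    and root: "r \<in> V"
    and FL: "F \<subseteq> L"
    and Fsol: "\<Union>(link_edges E ` F) = E"
    and u_up: "u \<in> up_links E r L"
    and u_tb: "u = {t, b}" and tb: "ancestor E r t b"
    and vu_anc: "ancestor E r vu t"
    and vu_cov: "link_edges E u \<subseteq> \<Union>(link_edges E ` Bset E r F vu)"
    and vu_far: "\<forall>x. ancestor E r x t \<and> link_edges E u \<subseteq> \<Union>(link_edges E ` Bset E r F x)
                   \<longrightarrow> depth E r x \<le> depth E r vu"
    and Fu_sub: "Fu \<subseteq> Bset E r F vu"
    and Fu_cov: "link_edges E u \<subseteq> \<Union>(link_edges E ` Fu)"
    and Fu_min: "\<forall>F'. F' \<subset> Fu \<longrightarrow> \<not> link_edges E u \<subseteq> \<Union>(link_edges E ` F')"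
  shows "thin2 E V Fu"
proof -
  have "u \<in> binom2 V" using u_up links unfolding up_links_def by auto
  then have tb_V: "t \<in> V" "b \<in> V" unfolding u_tb binom2_def by auto
  have u_path: "link_edges E u = edges_of (tpath E t b)"
    unfolding u_tb by (rule link_edges_pair[OF tree tb_V])
  have "Fu \<subseteq> binom2 V" using Fu_sub FL links unfolding Bset_def by auto
  with tree tpath_correct[OF tree tb_V] Fu_cov Fu_min show ?thesis
    unfolding u_path by (blast intro: minimal_link_cover_of_path_thin2)
qed

end
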